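(* Let $G$ and $H$ be connected graphs with $\partial(G)=\sigma(G)$ and $\partial(H)=\sigma(H)$. Then $$dim_s(G\square H)=\min\{|\partial(G)|(|\partial(H)|-1),\ |\partial(H)|(|\partial(G)|-1)\}.$$
   Context: Graphs are finite, simple, undirected; $d_G$ is the shortest-path distance. A vertex is simplicial if its neighbors induce a complete graph; $\sigma(G)$ is the set of simplicial vertices. A vertex $u$ is maximally distant from $v$ if $d_G(v,w)\le d_G(u,v)$ for every neighbor $w$ of $u$; distinct $u,v$ are mutually maximally distant if each is maximally distant from the other; the boundary $\partial(G)$ is the set of vertices mutually maximally distant with some vertex. $I_G[u,v]$ is the set of vertices on some shortest $u$–$v$ path; $w$ strongly resolves $u,v$ if $v\in I_G[u,w]$ or $u\in I_G[v,w]$; $dim_s(G)$ is the minimum size of a set $S\subseteq V(G)$ such that every pair of vertices is strongly resolved by some vertex of $S$. $G\square H$ is the Cartesian product: vertex set $V(G)\times V(H)$, $(a,b)\sim(c,d)$ iff ($a=c$ and $bd\in E(H)$) or ($b=d$ and $ac\in E(G)$). *)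

theory Defs
  imports Main
begin

record 'a graph =
  verts :: "'a set"
  adj :: "'a \<Rightarrow> 'a \<Rightarrow> bool"

definition graph :: "'a graph \<Rightarrow> bool" where
  "graph G \<longleftrightarrow> finite (verts G) \<and> verts G \<noteq> {} \<and>
     (\<forall>u v. adj G u v \<longrightarrow> u \<in> verts G \<and> v \<in> verts G) \<and>
     (\<forall>u v. adj G u v \<longrightarrow> adj G v u) \<and> (\<forall>u. \<not> adj G u u)"

fun walk :: "'a graph \<Rightarrow> 'a list \<Rightarrow> bool" where
  "walk G [] = False"
| "walk G [v] = (v \<in> verts G)"
| "walk G (u # v # vs) = (adj G u v \<and> walk G (v # vs))"

definition connected :: "'a graph \<Rightarrow> bool" where
  "connected G \<longleftrightarrow> (\<forall>u\<in>verts G. \<forall>v\<in>verts G.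
     \<exists>p. walk G p \<and> hd p = u \<and> last p = v)"

definition gdist :: "'a graph \<Rightarrow> 'a \<Rightarrow> 'a \<Rightarrow> nat" where
  "gdist G u v = (LEAST n. \<exists>p. walk G p \<and> hd p = u \<and> last p = v \<and> length p = Suc n)"

definition nbrs :: "'a graph \<Rightarrow> 'a \<Rightarrow> 'a set" where
  "nbrs G v = {w. adj G v w}"

definition simplicial :: "'a graph \<Rightarrow> 'a \<Rightarrow> bool" where
  "simplicial G v \<longleftrightarrow> v \<in> verts G \<and>
     (\<forall>x\<in>nbrs G v. \<forall>y\<in>nbrs G v. x \<noteq> y \<longrightarrow> adj G x y)"

definition simplicial_set :: "'a graph \<Rightarrow> 'a set" where
  "simplicial_set G = {v\<in>verts G. simplicial G v}"

definition max_distant :: "'a graph \<Rightarrow> 'a \<Rightarrow> 'a \<Rightarrow> bool" where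
  "max_distant G u v \<longleftrightarrow> (\<forall>w\<in>nbrs G u. gdist G v w \<le> gdist G u v)"

definition mutually_max_distant :: "'a graph \<Rightarrow> 'a \<Rightarrow> 'a \<Rightarrow> bool" where
  "mutually_max_distant G u v \<longleftrightarrow> u \<noteq> v \<and> max_distant G u v \<and> max_distant G v u"

definition boundary :: "'a graph \<Rightarrow> 'a set" where
  "boundary G = {u\<in>verts G. \<exists>v\<in>verts G. mutually_max_distant G u v}"

definition interval :: "'a graph \<Rightarrow> 'a \<Rightarrow> 'a \<Rightarrow> 'a set" where
  "interval G u v = {w\<in>verts G. gdist G u w + gdist G w v = gdist G u v}"

definition strongly_resolves :: "'a graph \<Rightarrow> 'a \<Rightarrow> 'a \<Rightarrow> 'a \<Rightarrow> bool" where
  "strongly_resolves G w u v \<longleftrightarrow> v \<in> interval G u w \<or> u \<in> interval G v w"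

definition strong_resolving_set :: "'a graph \<Rightarrow> 'a set \<Rightarrow> bool" where
  "strong_resolving_set G S \<longleftrightarrow> S \<subseteq> verts G \<and>
     (\<forall>u\<in>verts G. \<forall>v\<in>verts G. u \<noteq> v \<longrightarrow> (\<exists>w\<in>S. strongly_resolves G w u v))"

definition strong_metric_dim :: "'a graph \<Rightarrow> nat" where
  "strong_metric_dim G = (LEAST k. \<exists>S. strong_resolving_set G S \<and> card S = k)"

definition cart_prod :: "'a graph \<Rightarrow> 'b graph \<Rightarrow> ('a \<times> 'b) graph" where
  "cart_prod G H = \<lparr> verts = verts G \<times> verts H,
     adj = (\<lambda>(a, b) (c, d). (a = c \<and> a \<in> verts G \<and> adj H b d) \<or> (b = d \<and> b \<in> verts H \<and> adj G a c)) \<rparr>"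

end

theory Submission
  imports Defs
begin

text \<open>A pair of vertices has to be strongly resolved only if it is mutually maximally distant,
  and such a pair is resolved only by its own members; so the strong resolving sets are exactly the
  vertex covers of the mutually-maximally-distant pairs. In the Cartesian product distances add up,
  hence \<open>(a, b)\<close> and \<open>(c, d)\<close> are mutually maximally distant iff \<open>a, c\<close> and \<open>b, d\<close> are; when
  the boundary consists of simplicial vertices, any two distinct boundary vertices are mutually
  maximally distant. So one must cover all pairs of cells of the grid \<open>\<partial>G \<times> \<partial>H\<close> in different
  rows and different columns. The uncovered cells pairwise share a row or column, hence lie in a
  single line, and deleting a longest line is optimal.\<close>

lemma adj_in_verts:
  assumes "graph G" and "adj G u v"
  shows "u \<in> verts G" and "v \<in> verts G"
  using assms by (auto simp: graph_def)

lemma adj_sym: "graph G \<Longrightarrow> adj G u v \<Longrightarrow> adj G v u"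
  by (simp add: graph_def)

lemma walk_not_Nil: "walk G p \<Longrightarrow> p \<noteq> []"
  by (cases p) auto

lemma walk_append_iff:
  assumes "graph G" and "p \<noteq> []" and "q \<noteq> []"
  shows "walk G (p @ q) \<longleftrightarrow> walk G p \<and> walk G q \<and> adj G (last p) (hd q)"
  using assms(2)
proof (induction p rule: list_nonempty_induct)
  case (single a)
  then show ?case using assms(1,3) by (cases q) (auto simp: graph_def)
next
  case (cons a p)
  then show ?case by (cases p) auto
qed

lemma walk_snoc: "graph G \<Longrightarrow> walk G p \<Longrightarrow> adj G (last p) w \<Longrightarrow> walk G (p @ [w])"
  using walk_append_iff[of G p "[w]"] walk_not_Nil[of G p] adj_in_verts by fastforce

lemma walk_rev: "graph G \<Longrightarrow> walk G p \<Longrightarrow> walk G (rev p)"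
proof (induction G p rule: walk.induct)
  case (3 G u v vs)
  then have "walk G (rev (v # vs))" "adj G (last (rev (v # vs))) u" "u \<in> verts G"
    using adj_sym adj_in_verts by auto
  then show ?case using walk_append_iff[of G "rev (v # vs)" "[u]"] 3 by simp
qed auto

lemma lipschitz_along_walk:
  assumes "walk G p" and "\<And>v w. adj G v w \<Longrightarrow> f w \<le> f v + (1::nat)"
  shows "f (last p) \<le> f (hd p) + (length p - 1)"
  using assms
proof (induction G p rule: walk.induct)
  case (3 G u v vs)
  then have "f (last (v # vs)) \<le> f v + length vs" and "f v \<le> f u + 1" by auto
  then show ?case by simp
qed auto

lemma gdist_le_walk_length: "walk G p \<Longrightarrow> gdist G (hd p) (last p) \<le> length p - 1"
  unfolding gdist_def using walk_not_Nil[of G p] by (intro Least_le exI[of _ p]) auto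

lemma shortest_walk:
  assumes "connected G" and "u \<in> verts G" and "v \<in> verts G"
  obtains p where "walk G p" "hd p = u" "last p = v" "length p = Suc (gdist G u v)"
proof -
  obtain p where p: "walk G p" "hd p = u" "last p = v"
    using assms unfolding connected_def by blast
  then have "\<exists>n p. walk G p \<and> hd p = u \<and> last p = v \<and> length p = Suc n"
    using walk_not_Nil[of G p] by (intro exI[of _ "length p - 1"] exI[of _ p]) auto
  then have "\<exists>p. walk G p \<and> hd p = u \<and> last p = v \<and> length p = Suc (gdist G u v)"
    unfolding gdist_def by (rule LeastI_ex)
  with that show thesis by blast
qed

lemma gdist_self: "u \<in> verts G \<Longrightarrow> gdist G u u = 0"
  using gdist_le_walk_length[of G "[u]"] by simp

lemma gdist_eq_0_iff:
  assumes "connected G" and "u \<in> verts G" and "v \<in> verts G"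
  shows "gdist G u v = 0 \<longleftrightarrow> u = v"
proof
  assume "gdist G u v = 0"
  then obtain p where "walk G p" "hd p = u" "last p = v" "length p = 1"
    using shortest_walk[OF assms] by auto
  then show "u = v" by (cases p) auto
qed (use assms gdist_self in auto)

lemma gdist_adj_le:
  assumes "graph G" "connected G" "u \<in> verts G" "v \<in> verts G" "adj G v w"
  shows "gdist G u w \<le> gdist G u v + 1"
proof -
  obtain p where p: "walk G p" "hd p = u" "last p = v" "length p = Suc (gdist G u v)"
    using shortest_walk[OF assms(2-4)] by blast
  have "p \<noteq> []" using walk_not_Nil[OF p(1)] .
  then show ?thesis
    using gdist_le_walk_length[OF walk_snoc[OF assms(1) p(1)]] p assms(5) by simp
qed

lemma gdist_commute:
  assumes "graph G" "connected G" "u \<in> verts G" "v \<in> verts G"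
  shows "gdist G u v = gdist G v u"
proof -
  have le: "gdist G x y \<le> gdist G y x" if x: "x \<in> verts G" and y: "y \<in> verts G" for x y
  proof -
    obtain p where p: "walk G p" "hd p = y" "last p = x" "length p = Suc (gdist G y x)"
      using shortest_walk[OF assms(2) y x] by blast
    have "p \<noteq> []" using walk_not_Nil[OF p(1)] .
    then have "hd (rev p) = x" "last (rev p) = y" using p by (simp_all add: hd_rev last_rev)
    then show ?thesis
      using gdist_le_walk_length[OF walk_rev[OF assms(1) p(1)]] p(4) by simp
  qed
  show ?thesis using le[of u v] le[of v u] assms by simp
qed

lemma gdist_closer_neighbour:
  assumes "graph G" "connected G" "u \<in> verts G" "v \<in> verts G" "u \<noteq> v"
  obtains w where "adj G v w" "gdist G u w + 1 = gdist G u v"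
proof -
  obtain p where p: "walk G p" "hd p = u" "last p = v" "length p = Suc (gdist G u v)"
    using shortest_walk[OF assms(2-4)] by blast
  define q where "q = butlast p"
  have pq: "p = q @ [v]"
    using p walk_not_Nil unfolding q_def by (metis append_butlast_last_id)
  have "q \<noteq> []" using pq p assms(5) by auto
  then have q: "walk G q" "adj G (last q) v" "hd q = u"
    using walk_append_iff[of G q "[v]"] assms(1) p pq by auto
  have "gdist G u (last q) \<le> length q - 1"
    using gdist_le_walk_length[OF q(1)] q(3) by simp
  moreover have "gdist G u v \<le> gdist G u (last q) + 1"
    using gdist_adj_le[OF assms(1-3)] adj_in_verts[OF assms(1)] q(2) by blast
  moreover have "length q = gdist G u v" using pq p by simp
  ultimately show thesis
    using that[of "last q"] adj_sym[OF assms(1) q(2)] \<open>q \<noteq> []\<close> by (cases q) auto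
qed

lemma gdist_triangle:
  assumes "graph G" "connected G" "u \<in> verts G" "v \<in> verts G" "w \<in> verts G"
  shows "gdist G u v \<le> gdist G u w + gdist G w v"
  using assms(4)
proof (induction "gdist G w v" arbitrary: v)
  case 0
  then show ?case using gdist_eq_0_iff[OF assms(2,5) 0(2)] by simp
next
  case (Suc n)
  then have "w \<noteq> v" using gdist_self[OF assms(5)] by auto
  then obtain x where x: "adj G v x" "gdist G w x + 1 = gdist G w v"
    using gdist_closer_neighbour[OF assms(1,2,5) Suc.prems] by blast
  have "x \<in> verts G" using adj_in_verts(2)[OF assms(1) x(1)] .
  moreover have "n = gdist G w x" using Suc.hyps(2) x(2) by simp
  ultimately have "gdist G u x \<le> gdist G u w + n" using Suc.hyps(1)[of x] by simp
  moreover have "gdist G u v \<le> gdist G u x + 1"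
    using gdist_adj_le[OF assms(1-3) \<open>x \<in> verts G\<close>] adj_sym[OF assms(1) x(1)] by blast
  ultimately show ?case using Suc.hyps(2) x(2) by linarith
qed

lemma connected_gdist_eqI:
  assumes g: "graph K"
    and f_self: "\<And>u. u \<in> verts K \<Longrightarrow> f u u = (0::nat)"
    and f_adj: "\<And>u v w. u \<in> verts K \<Longrightarrow> v \<in> verts K \<Longrightarrow> adj K v w \<Longrightarrow> f u w \<le> f u v + 1"
    and f_step: "\<And>u v. u \<in> verts K \<Longrightarrow> v \<in> verts K \<Longrightarrow> u \<noteq> v \<Longrightarrow>
      \<exists>w. adj K v w \<and> f u w + 1 = f u v"
  shows "connected K" and "\<And>u v. u \<in> verts K \<Longrightarrow> v \<in> verts K \<Longrightarrow> gdist K u v = f u v"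
proof -
  have walk_of_length: "\<exists>p. walk K p \<and> hd p = u \<and> last p = v \<and> length p = Suc n"
    if "u \<in> verts K" "v \<in> verts K" "f u v = n" for u v n
    using that
  proof (induction n arbitrary: v)
    case 0
    then have "u = v" using f_step by force
    then show ?case using 0 by (intro exI[of _ "[u]"]) auto
  next
    case (Suc n)
    then have "u \<noteq> v" using f_self by auto
    then obtain w where w: "adj K v w" "f u w + 1 = f u v" using f_step Suc.prems by blast
    then obtain q where q: "walk K q" "hd q = u" "last q = w" "length q = Suc n"
      using Suc adj_in_verts(2)[OF g w(1)] by auto
    have "walk K (q @ [v])" using walk_snoc[OF g q(1)] q(3) adj_sym[OF g w(1)] by simp
    moreover have "hd (q @ [v]) = u" using q walk_not_Nil[OF q(1)] by simp
    ultimately show ?case using q by (intro exI[of _ "q @ [v]"]) auto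
  qed
  then show conn: "connected K" unfolding connected_def by blast
  fix u v assume uv: "u \<in> verts K" "v \<in> verts K"
  obtain p where p: "walk K p" "hd p = u" "last p = v" "length p = Suc (f u v)"
    using walk_of_length[OF uv] by blast
  have "gdist K u v \<le> f u v" using gdist_le_walk_length[OF p(1)] p by simp
  moreover obtain p' where p': "walk K p'" "hd p'= u" "last p' = v" "length p' = Suc (gdist K u v)"
    using shortest_walk[OF conn uv] by blast
  have "f u v \<le> f u u + (length p' - 1)"
    using lipschitz_along_walk[OF p'(1), of "f u"] f_adj[OF uv(1)] adj_in_verts(1)[OF g] p' by blast
  ultimately show "gdist K u v = f u v" using f_self[OF uv(1)] p'(4) by simp
qed

lemma verts_cart_prod [simp]: "verts (cart_prod G H) = verts G \<times> verts H"
  by (simp add: cart_prod_def)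

lemma adj_cart_prod [simp]:
  "adj (cart_prod G H) (a, b) (c, d) \<longleftrightarrow>
     (a = c \<and> a \<in> verts G \<and> adj H b d) \<or> (b = d \<and> b \<in> verts H \<and> adj G a c)"
  by (simp add: cart_prod_def)

lemma graph_cart_prod: "graph G \<Longrightarrow> graph H \<Longrightarrow> graph (cart_prod G H)"
  unfolding graph_def cart_prod_def by auto

lemma connected_gdist_cart_prod:
  assumes G: "graph G" "connected G" and H: "graph H" "connected H"
  shows "connected (cart_prod G H)"
    and "\<And>x y. x \<in> verts (cart_prod G H) \<Longrightarrow> y \<in> verts (cart_prod G H) \<Longrightarrow>
      gdist (cart_prod G H) x y = gdist G (fst x) (fst y) + gdist H (snd x) (snd y)"
proof -
  let ?K = "cart_prod G H"
  let ?f = "\<lambda>x y. gdist G (fst x) (fst y) + gdist H (snd x) (snd y)"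
  have self: "?f x x = 0" if "x \<in> verts ?K" for x
    using that by (auto simp: gdist_self)
  have adj: "?f x z \<le> ?f x y + 1" if "x \<in> verts ?K" "y \<in> verts ?K" "adj ?K y z" for x y z
    using that gdist_adj_le[OF G] gdist_adj_le[OF H] by (cases x; cases y; cases z) fastforce
  have step: "\<exists>z. adj ?K y z \<and> ?f x z + 1 = ?f x y"
    if xy: "x \<in> verts ?K" "y \<in> verts ?K" "x \<noteq> y" for x y
  proof -
    obtain a b c d where ab: "x = (a, b)" "y = (c, d)" by (cases x, cases y)
    have v: "a \<in> verts G" "b \<in> verts H" "c \<in> verts G" "d \<in> verts H" using xy ab by auto
    show ?thesis
    proof (cases "a = c")
      case False
      then obtain c' where "adj G c c'" "gdist G a c' + 1 = gdist G a c"
        using gdist_closer_neighbour[OF G v(1,3)] by blast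
      then show ?thesis using ab v by (intro exI[of _ "(c', d)"]) auto
    next
      case True
      then have "b \<noteq> d" using xy ab by simp
      then obtain d' where "adj H d d'" "gdist H b d' + 1 = gdist H b d"
        using gdist_closer_neighbour[OF H v(2,4)] by blast
      then show ?thesis using ab v True by (intro exI[of _ "(c, d')"]) auto
    qed
  qed
  note char = connected_gdist_eqI[OF graph_cart_prod[OF G(1) H(1)] self adj step]
  show "connected ?K" by (rule char(1))
  show "\<And>x y. x \<in> verts ?K \<Longrightarrow> y \<in> verts ?K \<Longrightarrow> gdist ?K x y = ?f x y" by (rule char(2))
qed

lemma gdist_cart_prod:
  assumes "graph G" "connected G" "graph H" "connected H"
    and "a \<in> verts G" "c \<in> verts G" "b \<in> verts H" "d \<in> verts H"
  shows "gdist (cart_prod G H) (a, b) (c, d) = gdist G a c + gdist H b d"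
  using connected_gdist_cart_prod(2)[OF assms(1-4)] assms(5-8) by simp

lemma ex_max_image_finite:
  assumes "finite A" and "a \<in> A"
  obtains x where "x \<in> A" and "\<And>y. y \<in> A \<Longrightarrow> (f y :: 'b :: linorder) \<le> f x"
proof -
  have "Max (f ` A) \<in> f ` A" using assms by (intro Max_in) auto
  then obtain x where x: "x \<in> A" "f x = Max (f ` A)" by (metis imageE)
  have "f y \<le> f x" if "y \<in> A" for y using assms(1) that x(2) by simp
  with x(1) show thesis by (rule that)
qed

lemma interval_commute:
  assumes "graph K" "connected K" "x \<in> verts K" "y \<in> verts K"
  shows "v \<in> interval K x y \<longleftrightarrow> v \<in> interval K y x"
  using gdist_commute[OF assms(1,2)] assms(3,4) by (auto simp: interval_def)

lemma endpoints_in_interval: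
  assumes "x \<in> verts K" "y \<in> verts K"
  shows "x \<in> interval K x y" and "y \<in> interval K x y"
  using assms by (simp_all add: interval_def gdist_self)

lemma interval_max_distant_end:
  assumes g: "graph K" "connected K" and x: "x \<in> verts K" and w: "w \<in> verts K"
    and y: "y \<in> interval K x w" and md: "max_distant K y x"
  shows "w = y"
proof (rule ccontr)
  assume "w \<noteq> y"
  have yv: "y \<in> verts K" and geo: "gdist K x y + gdist K y w = gdist K x w"
    using y by (auto simp: interval_def)
  obtain z where z: "adj K y z" "gdist K w z + 1 = gdist K w y"
    using gdist_closer_neighbour[OF g w yv \<open>w \<noteq> y\<close>] by blast
  have zv: "z \<in> verts K" using adj_in_verts(2)[OF g(1) z(1)] .
  have "gdist K x w \<le> gdist K x z + gdist K z w" using gdist_triangle[OF g x w zv] .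
  moreover have "gdist K x z \<le> gdist K y x" using md z(1) by (simp add: max_distant_def nbrs_def)
  ultimately show False
    using geo z(2) gdist_commute[OF g zv w] gdist_commute[OF g yv w] gdist_commute[OF g yv x]
    by linarith
qed

lemma interval_shift:
  assumes g: "graph K" "connected K" and x: "x \<in> verts K" and y: "y \<in> verts K"
    and u: "u \<in> interval K v x" and v: "v \<in> interval K x y"
  shows "v \<in> interval K u y"
proof -
  have uv: "u \<in> verts K" "v \<in> verts K" using u v by (auto simp: interval_def)
  have "gdist K u y \<le> gdist K u v + gdist K v y" "gdist K x y \<le> gdist K x u + gdist K u y"
    using gdist_triangle[OF g uv(1) y uv(2)] gdist_triangle[OF g x y uv(1)] .
  then show ?thesis
    using u v uv gdist_commute[OF g uv(1) uv(2)] gdist_commute[OF g uv(1) x]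
      gdist_commute[OF g uv(2) x]
    by (auto simp: interval_def)
qed

text \<open>A neighbour of \<open>x\<close> further from \<open>y\<close> would still be reached from \<open>v\<close> through \<open>u\<close>,
  but further away than \<open>x\<close>.\<close>
lemma furthest_through_max_distant:
  assumes g: "graph K" "connected K" and x: "x \<in> verts K" and y: "y \<in> verts K"
    and u: "u \<in> interval K v x"
    and furthest: "\<And>x'. x' \<in> verts K \<Longrightarrow> u \<in> interval K v x' \<Longrightarrow> gdist K v x' \<le> gdist K v x"
    and v: "v \<in> interval K y x"
  shows "max_distant K x y"
  unfolding max_distant_def nbrs_def
proof (rule ballI, rule ccontr)
  fix z assume "z \<in> {w. adj K x w}" "\<not> gdist K y z \<le> gdist K x y"
  then have z: "adj K x z" "\<not> gdist K y z \<le> gdist K x y" by simp_all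
  have uv: "u \<in> verts K" "v \<in> verts K" using u v by (auto simp: interval_def)
  have zv: "z \<in> verts K" using adj_in_verts(2)[OF g(1) z(1)] .
  have "gdist K y z \<le> gdist K y v + gdist K v z" "gdist K v z \<le> gdist K v u + gdist K u z"
    using gdist_triangle[OF g y zv uv(2)] gdist_triangle[OF g uv(2) zv uv(1)] .
  moreover have "gdist K u z \<le> gdist K u x + 1" using gdist_adj_le[OF g uv(1) x z(1)] .
  moreover have "gdist K v u + gdist K u x = gdist K v x" "gdist K y v + gdist K v x = gdist K y x"
    using u v by (simp_all add: interval_def)
  ultimately have "gdist K v u + gdist K u z = gdist K v z" "gdist K v x < gdist K v z"
    using z(2) gdist_commute[OF g x y] by linarith+
  then show False using furthest[OF zv] uv(1) by (auto simp: interval_def)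
qed

lemma mutually_max_distant_resolving_pair:
  assumes g: "graph K" "connected K" and u: "u \<in> verts K" and v: "v \<in> verts K" and "u \<noteq> v"
  obtains x y where "x \<in> verts K" "y \<in> verts K" "mutually_max_distant K x y"
    "strongly_resolves K x u v" "strongly_resolves K y u v"
proof -
  have fin: "finite (verts K)" using g(1) by (simp add: graph_def)
  define X where "X = {x \<in> verts K. u \<in> interval K v x}"
  have "finite X" "u \<in> X"
    using fin u endpoints_in_interval(2)[OF v u] by (simp_all add: X_def)
  then obtain x where "x \<in> X" and x_max: "\<And>x'. x' \<in> X \<Longrightarrow> gdist K v x' \<le> gdist K v x"
    using ex_max_image_finite[where f = "gdist K v"] by blast
  then have xv: "x \<in> verts K" and ux: "u \<in> interval K v x" by (simp_all add: X_def)
  define Y where "Y = {y \<in> verts K. v \<in> interval K x y}"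
  have "finite Y" "v \<in> Y"
    using fin v endpoints_in_interval(2)[OF xv v] by (simp_all add: Y_def)
  then obtain y where "y \<in> Y" and y_max: "\<And>y'. y' \<in> Y \<Longrightarrow> gdist K x y' \<le> gdist K x y"
    using ex_max_image_finite[where f = "gdist K x"] by blast
  then have yv: "y \<in> verts K" and vy: "v \<in> interval K x y" by (simp_all add: Y_def)
  have "max_distant K x y"
    using furthest_through_max_distant[OF g xv yv ux] x_max vy interval_commute[OF g xv yv]
    by (simp add: X_def)
  moreover have "max_distant K y x"
    using furthest_through_max_distant[OF g yv xv vy] y_max endpoints_in_interval(1)[OF xv yv]
    by (simp add: Y_def)
  moreover have "x \<noteq> y"
  proof
    assume "x = y"
    moreover have "gdist K x v + gdist K v y = gdist K x y" using vy by (simp add: interval_def)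
    ultimately have "v = x" using gdist_eq_0_iff[OF g(2) xv v] gdist_self[OF xv] by simp
    moreover have "gdist K v u + gdist K u x = gdist K v x" using ux by (simp add: interval_def)
    ultimately have "gdist K v u = 0" using gdist_self[OF v] by simp
    then show False using gdist_eq_0_iff[OF g(2) v u] \<open>u \<noteq> v\<close> by simp
  qed
  moreover have "strongly_resolves K x u v" using ux by (simp add: strongly_resolves_def)
  moreover have "strongly_resolves K y u v"
    using interval_shift[OF g xv yv ux vy] by (simp add: strongly_resolves_def)
  ultimately show thesis using that xv yv by (simp add: mutually_max_distant_def)
qed

lemma strong_resolving_set_iff:
  assumes g: "graph K" "connected K"
  shows "strong_resolving_set K S \<longleftrightarrow> S \<subseteq> verts K \<and>
    (\<forall>x\<in>verts K. \<forall>y\<in>verts K. mutually_max_distant K x y \<longrightarrow> x \<in> S \<or> y \<in> S)"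
proof
  assume S: "strong_resolving_set K S"
  have "x \<in> S \<or> y \<in> S" if xy: "x \<in> verts K" "y \<in> verts K" "mutually_max_distant K x y" for x y
  proof -
    obtain w where w: "w \<in> S" "strongly_resolves K w x y"
      using S xy unfolding strong_resolving_set_def mutually_max_distant_def by blast
    have "w \<in> verts K" using w(1) S by (auto simp: strong_resolving_set_def)
    then have "w = y \<or> w = x"
      using w(2) interval_max_distant_end[OF g xy(1)] interval_max_distant_end[OF g xy(2)] xy(3)
      unfolding strongly_resolves_def mutually_max_distant_def by blast
    then show ?thesis using w(1) by auto
  qed
  then show "S \<subseteq> verts K \<and>
      (\<forall>x\<in>verts K. \<forall>y\<in>verts K. mutually_max_distant K x y \<longrightarrow> x \<in> S \<or> y \<in> S)"
    using S by (auto simp: strong_resolving_set_def)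
next
  assume S: "S \<subseteq> verts K \<and>
    (\<forall>x\<in>verts K. \<forall>y\<in>verts K. mutually_max_distant K x y \<longrightarrow> x \<in> S \<or> y \<in> S)"
  have "\<exists>w\<in>S. strongly_resolves K w u v"
    if "u \<in> verts K" "v \<in> verts K" "u \<noteq> v" for u v
    using mutually_max_distant_resolving_pair[OF g that] S by metis
  then show "strong_resolving_set K S" using S by (simp add: strong_resolving_set_def)
qed

lemma simplicial_max_distant:
  assumes g: "graph G" "connected G" and a: "simplicial G a" and c: "c \<in> verts G" and "a \<noteq> c"
  shows "max_distant G a c"
  unfolding max_distant_def
proof
  fix w assume w: "w \<in> nbrs G a"
  have av: "a \<in> verts G" using a by (simp add: simplicial_def)
  obtain z where z: "adj G a z" "gdist G c z + 1 = gdist G c a"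
    using gdist_closer_neighbour[OF g c av] \<open>a \<noteq> c\<close> by metis
  have "w = z \<or> adj G z w" using a w z(1) by (auto simp: simplicial_def nbrs_def)
  then have "gdist G c w \<le> gdist G c z + 1"
    using gdist_adj_le[OF g c adj_in_verts(2)[OF g(1) z(1)]] by auto
  then show "gdist G c w \<le> gdist G a c" using z(2) gdist_commute[OF g c av] by simp
qed

lemma mutually_max_distant_iff_boundary:
  assumes g: "graph G" "connected G" and boundary: "boundary G = simplicial_set G"
    and "a \<in> verts G" "c \<in> verts G"
  shows "mutually_max_distant G a c \<longleftrightarrow> a \<noteq> c \<and> a \<in> boundary G \<and> c \<in> boundary G"
proof
  assume "mutually_max_distant G a c"
  moreover from this have "mutually_max_distant G c a" by (auto simp: mutually_max_distant_def)
  ultimately show "a \<noteq> c \<and> a \<in> boundary G \<and> c \<in> boundary G"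
    using assms(4,5) by (auto simp: boundary_def mutually_max_distant_def)
next
  assume "a \<noteq> c \<and> a \<in> boundary G \<and> c \<in> boundary G"
  then show "mutually_max_distant G a c"
    using simplicial_max_distant[OF g] boundary assms(4,5)
    by (auto simp: mutually_max_distant_def simplicial_set_def)
qed

lemma not_max_distant_self:
  assumes g: "graph G" "connected G" and "card (verts G) \<ge> 2" and a: "a \<in> verts G"
  shows "\<not> max_distant G a a"
proof
  assume md: "max_distant G a a"
  have "\<not> verts G \<subseteq> {a}" using card_mono[of "{a}" "verts G"] assms(3) by auto
  then obtain c where c: "c \<in> verts G" "c \<noteq> a" by blast
  then obtain w where w: "adj G a w" using gdist_closer_neighbour[OF g c(1) a] by metis
  have wv: "w \<in> verts G" using adj_in_verts(2)[OF g(1) w] .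
  have "gdist G a w = 0" using md w gdist_self[OF a] by (simp add: max_distant_def nbrs_def)
  then have "a = w" using gdist_eq_0_iff[OF g(2) a wv] by simp
  then show False using w g(1) by (simp add: graph_def)
qed

lemma nbrs_cart_prod:
  assumes "a \<in> verts G" "b \<in> verts H"
  shows "nbrs (cart_prod G H) (a, b) = (\<lambda>a'. (a', b)) ` nbrs G a \<union> Pair a ` nbrs H b"
  using assms by (auto simp: nbrs_def)

lemma max_distant_cart_prod_iff:
  assumes G: "graph G" "connected G" and H: "graph H" "connected H"
    and v: "a \<in> verts G" "c \<in> verts G" "b \<in> verts H" "d \<in> verts H"
  shows "max_distant (cart_prod G H) (a, b) (c, d) \<longleftrightarrow> max_distant G a c \<and> max_distant H b d"
proof -
  have nG: "a' \<in> verts G" if "a' \<in> nbrs G a" for a'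
    using that adj_in_verts(2)[OF G(1)] by (simp add: nbrs_def)
  have nH: "b' \<in> verts H" if "b' \<in> nbrs H b" for b'
    using that adj_in_verts(2)[OF H(1)] by (simp add: nbrs_def)
  have "max_distant (cart_prod G H) (a, b) (c, d) \<longleftrightarrow>
      (\<forall>a'\<in>nbrs G a. gdist G c a' + gdist H d b \<le> gdist G a c + gdist H b d) \<and>
      (\<forall>b'\<in>nbrs H b. gdist G c a + gdist H d b' \<le> gdist G a c + gdist H b d)"
    using v nG nH
    by (simp add: max_distant_def nbrs_cart_prod ball_Un gdist_cart_prod[OF G H] cong: ball_cong)
  then show ?thesis
    using gdist_commute[OF G v(2,1)] gdist_commute[OF H v(4,3)] by (simp add: max_distant_def)
qed

lemma mutually_max_distant_cart_prod_iff:
  assumes G: "graph G" "connected G" "card (verts G) \<ge> 2"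
    and H: "graph H" "connected H" "card (verts H) \<ge> 2"
    and v: "a \<in> verts G" "c \<in> verts G" "b \<in> verts H" "d \<in> verts H"
  shows "mutually_max_distant (cart_prod G H) (a, b) (c, d) \<longleftrightarrow>
    mutually_max_distant G a c \<and> mutually_max_distant H b d"
  using max_distant_cart_prod_iff[OF G(1,2) H(1,2) v]
    max_distant_cart_prod_iff[OF G(1,2) H(1,2) v(2,1,4,3)]
    not_max_distant_self[OF G v(1)] not_max_distant_self[OF H v(3)]
  by (auto simp: mutually_max_distant_def)

definition covers_nonattacking_pairs :: "'a set \<Rightarrow> 'b set \<Rightarrow> ('a \<times> 'b) set \<Rightarrow> bool" where
  "covers_nonattacking_pairs A B S \<longleftrightarrow> (\<forall>a\<in>A. \<forall>c\<in>A. \<forall>b\<in>B. \<forall>d\<in>B.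
     a \<noteq> c \<longrightarrow> b \<noteq> d \<longrightarrow> (a, b) \<in> S \<or> (c, d) \<in> S)"

lemma card_pairwise_attacking_le:
  assumes "finite A" "finite B" and T: "T \<subseteq> A \<times> B"
    and attacking: "\<And>a b c d. (a, b) \<in> T \<Longrightarrow> (c, d) \<in> T \<Longrightarrow> a = c \<or> b = d"
  shows "card T \<le> max (card A) (card B)"
proof -
  have "\<exists>a b. T \<subseteq> {a} \<times> B \<or> T \<subseteq> A \<times> {b}"
  proof (cases "T = {}")
    case False
    then obtain a b where ab: "(a, b) \<in> T" by auto
    show ?thesis
    proof (cases "T \<subseteq> {a} \<times> B")
      case False
      then obtain a' b' where a'b': "(a', b') \<in> T" "a' \<noteq> a" using T by auto
      then have "b' = b" using attacking[OF ab] by blast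
      have "y = b" if "(x, y) \<in> T" for x y
        using attacking[OF that ab] attacking[OF that a'b'(1)] a'b'(2) \<open>b' = b\<close> by blast
      then have "T \<subseteq> A \<times> {b}" using T by auto
      then show ?thesis by blast
    qed blast
  qed blast
  then obtain a b where "T \<subseteq> {a} \<times> B \<or> T \<subseteq> A \<times> {b}" by blast
  then show ?thesis
    using card_mono[of "{a} \<times> B" T] card_mono[of "A \<times> {b}" T] assms(1,2)
    by (auto simp: card_cartesian_product)
qed

lemma card_covers_nonattacking_pairs_ge:
  assumes "finite A" "finite B" "finite S" and "covers_nonattacking_pairs A B S"
  shows "card A * card B - max (card A) (card B) \<le> card S"
proof -
  have "card (A \<times> B - S) \<le> max (card A) (card B)"
    using assms(1,2,4) by (intro card_pairwise_attacking_le) (auto simp: covers_nonattacking_pairs_def)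
  moreover have "card (A \<times> B) = card (A \<times> B \<inter> S) + card (A \<times> B - S)"
    using assms(1,2) by (intro card_Int_Diff) auto
  moreover have "card (A \<times> B \<inter> S) \<le> card S" using assms(3) by (intro card_mono) auto
  ultimately show ?thesis by (simp add: card_cartesian_product)
qed

lemma ex_covers_nonattacking_pairs:
  assumes "finite A" "finite B"
  obtains S where "S \<subseteq> A \<times> B" "covers_nonattacking_pairs A B S"
    "card S = card A * card B - max (card A) (card B)"
proof (cases "A = {} \<or> B = {}")
  case True
  then show thesis by (intro that[of "{}"]) (auto simp: covers_nonattacking_pairs_def)
next
  case False
  then obtain a b where ab: "a \<in> A" "b \<in> B" by blast
  show thesis
  proof (cases "card A \<le> card B")
    case True
    have "card (A \<times> B - {a} \<times> B) = card A * card B - card B"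
      using assms ab by (subst card_Diff_subset) (auto simp: card_cartesian_product)
    then show thesis using True
      by (intro that[of "A \<times> B - {a} \<times> B"]) (auto simp: covers_nonattacking_pairs_def)
  next
    case False
    have "card (A \<times> B - A \<times> {b}) = card A * card B - card A"
      using assms ab by (subst card_Diff_subset) (auto simp: card_cartesian_product)
    then show thesis using False
      by (intro that[of "A \<times> B - A \<times> {b}"]) (auto simp: covers_nonattacking_pairs_def)
  qed
qed

lemma strong_resolving_set_cart_prod_iff:
  assumes G: "graph G" "connected G" "card (verts G) \<ge> 2" "boundary G = simplicial_set G"
    and H: "graph H" "connected H" "card (verts H) \<ge> 2" "boundary H = simplicial_set H"
  shows "strong_resolving_set (cart_prod G H) S \<longleftrightarrow>
    S \<subseteq> verts G \<times> verts H \<and> covers_nonattacking_pairs (boundary G) (boundary H) S"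
proof -
  let ?K = "cart_prod G H"
  have mmd: "mutually_max_distant ?K (a, b) (c, d) \<longleftrightarrow>
      a \<noteq> c \<and> a \<in> boundary G \<and> c \<in> boundary G \<and> b \<noteq> d \<and> b \<in> boundary H \<and> d \<in> boundary H"
    if "a \<in> verts G" "c \<in> verts G" "b \<in> verts H" "d \<in> verts H" for a b c d
    using mutually_max_distant_cart_prod_iff[OF G(1-3) H(1-3) that]
      mutually_max_distant_iff_boundary[OF G(1,2,4) that(1,2)]
      mutually_max_distant_iff_boundary[OF H(1,2,4) that(3,4)]
    by simp
  have sub: "boundary G \<subseteq> verts G" "boundary H \<subseteq> verts H" by (auto simp: boundary_def)
  have "(\<forall>x\<in>verts ?K. \<forall>y\<in>verts ?K. mutually_max_distant ?K x y \<longrightarrow> x \<in> S \<or> y \<in> S) \<longleftrightarrow>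
      covers_nonattacking_pairs (boundary G) (boundary H) S"
  proof
    assume resolving: "\<forall>x\<in>verts ?K. \<forall>y\<in>verts ?K. mutually_max_distant ?K x y \<longrightarrow> x \<in> S \<or> y \<in> S"
    show "covers_nonattacking_pairs (boundary G) (boundary H) S"
      unfolding covers_nonattacking_pairs_def
    proof (intro ballI impI)
      fix a c b d
      assume ab: "a \<in> boundary G" "c \<in> boundary G" "b \<in> boundary H" "d \<in> boundary H" "a \<noteq> c" "b \<noteq> d"
      then have v: "a \<in> verts G" "c \<in> verts G" "b \<in> verts H" "d \<in> verts H" using sub by blast+
      then have "mutually_max_distant ?K (a, b) (c, d)" using mmd[OF v] ab by simp
      then show "(a, b) \<in> S \<or> (c, d) \<in> S" using resolving v by simp
    qed
  next
    assume cover: "covers_nonattacking_pairs (boundary G) (boundary H) S"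
    show "\<forall>x\<in>verts ?K. \<forall>y\<in>verts ?K. mutually_max_distant ?K x y \<longrightarrow> x \<in> S \<or> y \<in> S"
    proof (intro ballI impI)
      fix x y assume "x \<in> verts ?K" "y \<in> verts ?K" "mutually_max_distant ?K x y"
      then show "x \<in> S \<or> y \<in> S"
        using mmd cover by (cases x, cases y) (auto simp: covers_nonattacking_pairs_def)
    qed
  qed
  then show ?thesis
    using strong_resolving_set_iff[OF graph_cart_prod[OF G(1) H(1)]
        connected_gdist_cart_prod(1)[OF G(1,2) H(1,2)]] by simp
qed

lemma mult_diff_max_eq_min:
  "(m::nat) * n - max m n = min (m * (n - 1)) (n * (m - 1))"
proof (cases "m \<le> n")
  case True
  then have "m * n - n \<le> m * n - m" by (rule diff_le_mono2)
  with True show ?thesis by (simp add: diff_mult_distrib2 mult.commute)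
next
  case False
  then have "m * n - m \<le> m * n - n" by (intro diff_le_mono2) simp
  with False show ?thesis by (simp add: diff_mult_distrib2 mult.commute)
qed

theorem corollary17:
  fixes G :: "'a graph" and H :: "'b graph"
  assumes "graph G" and "graph H"
    and "card (verts G) \<ge> 2" and "card (verts H) \<ge> 2"
    and "connected G" and "connected H"
    and "boundary G = simplicial_set G" and "boundary H = simplicial_set H"
  shows "strong_metric_dim (cart_prod G H) =
    min (card (boundary G) * (card (boundary H) - 1)) (card (boundary H) * (card (boundary G) - 1))"
proof -
  let ?A = "boundary G" and ?B = "boundary H"
  note srs_iff = strong_resolving_set_cart_prod_iff[OF assms(1,5,3,7) assms(2,6,4,8)]
  have fin: "finite (verts G)" "finite (verts H)" using assms(1,2) by (simp_all add: graph_def)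
  then have fin_AB: "finite ?A" "finite ?B" by (auto simp: boundary_def intro: finite_subset)
  have "strong_metric_dim (cart_prod G H) = card ?A * card ?B - max (card ?A) (card ?B)"
    unfolding strong_metric_dim_def
  proof (rule Least_equality)
    obtain S where "S \<subseteq> ?A \<times> ?B" "covers_nonattacking_pairs ?A ?B S"
      "card S = card ?A * card ?B - max (card ?A) (card ?B)"
      using ex_covers_nonattacking_pairs[OF fin_AB] .
    then show "\<exists>S. strong_resolving_set (cart_prod G H) S \<and> card S = card ?A * card ?B - max (card ?A) (card ?B)"
      using srs_iff by (auto simp: boundary_def)
  next
    fix k assume "\<exists>S. strong_resolving_set (cart_prod G H) S \<and> card S = k"
    then obtain S where "S \<subseteq> verts G \<times> verts H" "covers_nonattacking_pairs ?A ?B S" "card S = k"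
      using srs_iff by blast
    then show "card ?A * card ?B - max (card ?A) (card ?B) \<le> k"
      using card_covers_nonattacking_pairs_ge[OF fin_AB] finite_subset fin by blast
  qed
  then show ?thesis by (simp add: mult_diff_max_eq_min)
qed

end
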